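(* Let $\Omega\subset\mathbb{R}^d$ be a bounded open set, $T>0$, $T_0\in(0,T)$, $r_0>0$, and $\mathfrak{B}\in L^\infty(0,T;W^{1,\infty}(\mathbb{R}^d)^d)$. Let $\mathcal{O}\subset\mathbb{R}^d$ be a nonempty open set with bounded boundary, and assume that $(T,T_0,r_0,\mathfrak{B},\Omega)$ satisfies the flushing condition for $\mathcal{O}$. Then there exists an open set $\mathcal{O}_0$ with $\overline{\mathcal{O}_0}$ compact and contained in $\mathcal{O}$ such that $(T,T_0,r_0/2,\mathfrak{B},\Omega)$ satisfies the flushing condition for $\mathcal{O}_0$.
   Context: $\Phi(t,t_0,x_0)$ denotes the solution of $\frac{d}{dt}\Phi(t,t_0,x_0)=\mathfrak{B}(\Phi(t,t_0,x_0),t)$, $\Phi(t_0,t_0,x_0)=x_0$, for $t,t_0\in[0,T]$. For a nonempty open $\mathcal{O}\subset\mathbb{R}^d$ and $r>0$, we say $(T,T_0,r,\mathfrak{B},\Omega)$ satisfies the flushing condition for $\mathcal{O}$ if: for all $x_0\in\overline{\Omega}$ and all $t_0\in[T_0,T]$ there exists $t\in(t_0-T_0,t_0)$ such that $\Phi(t,t_0,x)\in\mathcal{O}$ for all $x\in\overline{B}(x_0,r)$. *)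

theory Defs
  imports "HOL-Analysis.Analysis"
begin

text \<open>Standing hypothesis: B is (a representative of) an element of
  L-infinity in time with values in W^{1,infinity}(R^d)^d on [0,T]:
  measurable in t, uniformly bounded, uniformly Lipschitz in x.\<close>
definition Linf_W1inf :: "real \<Rightarrow> ('a::euclidean_space \<Rightarrow> real \<Rightarrow> 'a) \<Rightarrow> bool" where
  "Linf_W1inf T B \<longleftrightarrow>
     (\<forall>x. (\<lambda>t. B x t) measurable_on {0..T}) \<and>
     (\<exists>M. \<forall>x. \<forall>t\<in>{0..T}. norm (B x t) \<le> M) \<and>
     (\<exists>L. \<forall>t\<in>{0..T}. L-lipschitz_on UNIV (\<lambda>x. B x t))"

text \<open>Phi is the flow of B on [0,T]: Phi(t,t0,x0) solves
  d/dt Phi = B(Phi,t), Phi(t0,t0,x0) = x0 (Caratheodory/integral sense).\<close>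
definition is_flow :: "real \<Rightarrow> ('a::euclidean_space \<Rightarrow> real \<Rightarrow> 'a) \<Rightarrow> (real \<Rightarrow> real \<Rightarrow> 'a \<Rightarrow> 'a) \<Rightarrow> bool" where
  "is_flow T B \<Phi> \<longleftrightarrow>
     (\<forall>t0\<in>{0..T}. \<forall>x0. \<Phi> t0 t0 x0 = x0 \<and>
        (\<forall>t\<in>{0..T}.
           (t0 \<le> t \<longrightarrow> ((\<lambda>s. B (\<Phi> s t0 x0) s) has_integral (\<Phi> t t0 x0 - x0)) {t0..t}) \<and>
           (t \<le> t0 \<longrightarrow> ((\<lambda>s. B (\<Phi> s t0 x0) s) has_integral (x0 - \<Phi> t t0 x0)) {t..t0})))"

definition flushing :: "real \<Rightarrow> real \<Rightarrow> real \<Rightarrow> (real \<Rightarrow> real \<Rightarrow> 'a::euclidean_space \<Rightarrow> 'a) \<Rightarrow> 'a set \<Rightarrow> 'a set \<Rightarrow> bool" where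
  "flushing T T0 r \<Phi> \<Omega> U \<longleftrightarrow>
     (\<forall>x0\<in>closure \<Omega>. \<forall>t0\<in>{T0..T}. \<exists>t\<in>{t0 - T0<..<t0}. \<forall>x\<in>cball x0 r. \<Phi> t t0 x \<in> U)"

end

theory Submission
  imports Defs
begin

(* For the flow of a field that is L-Lipschitz in space, Gronwall's inequality makes
  \<Phi>(t0,t,-) Lipschitz with constant exp (L T), and uniqueness makes it the inverse of
  \<Phi>(t,t0,-).  Hence if \<Phi>(t,t0,-) maps the r0-ball about x0 into U, it maps every point of
  the (r0/2)-ball to a point p with cball p (r0 / (2 exp (L T))) inside U.  Boundedness of B
  and of \<Omega> confine all such p to one fixed ball, so the union of the balls of half that
  radius about these points is an open set with compact closure in U that is flushed with
  radius r0/2. *)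

lemma gronwall_integral_inequality:
  fixes u :: "real \<Rightarrow> real"
  assumes cont: "continuous_on {a..b} u" and L: "0 \<le> L"
    and le: "\<And>s. s \<in> {a..b} \<Longrightarrow> u s \<le> c + L * integral {a..s} u"
    and s: "s \<in> {a..b}"
  shows "u s \<le> c * exp (L * (s - a))"
proof -
  define I where "I x = integral {a..x} u" for x
  define w where "w x = exp (- L * (x - a)) * (c + L * I x)" for x
  have I_cont: "continuous_on {a..b} I"
    unfolding I_def by (rule indefinite_integral_continuous_1[OF integrable_continuous_real[OF cont]])
  have "continuous_on {a..s} w"
    unfolding w_def using s by (intro continuous_intros continuous_on_subset[OF I_cont]) auto
  moreover have "\<exists>y. (w has_real_derivative y) (at x) \<and> y \<le> 0" if x: "a < x" "x < s" for x
  proof -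
    have "(I has_real_derivative u x) (at x within {a..b})"
      unfolding I_def using x s by (intro integral_has_real_derivative[OF cont]) auto
    then have "(I has_real_derivative u x) (at x)"
      using x s by (simp add: at_within_Icc_at)
    then have "(w has_real_derivative exp (- L * (x - a)) * (L * (u x - (c + L * I x)))) (at x)"
      unfolding w_def by (auto intro!: derivative_eq_intros simp: algebra_simps)
    moreover have "exp (- L * (x - a)) * (L * (u x - (c + L * I x))) \<le> 0"
      using le[of x] x s L unfolding I_def by (intro mult_nonneg_nonpos mult_nonneg_nonpos) auto
    ultimately show ?thesis by blast
  qed
  ultimately have "w s \<le> w a"
    using s by (intro DERIV_nonpos_imp_decreasing_open[of a s w]) auto
  have "exp (- L * (s - a)) * u s \<le> w s"
    unfolding w_def I_def using le[OF s] by (simp add: mult_left_mono)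
  also note \<open>w s \<le> w a\<close>
  also have "w a = c"
    by (simp add: w_def I_def)
  finally show ?thesis
    by (simp add: exp_minus divide_simps mult.commute)
qed

definition integral_curve :: "('a::euclidean_space \<Rightarrow> real \<Rightarrow> 'a) \<Rightarrow> (real \<Rightarrow> 'a) \<Rightarrow> real \<Rightarrow> real \<Rightarrow> bool" where
  "integral_curve B f a b \<longleftrightarrow>
     (\<forall>s\<in>{a..b}. ((\<lambda>\<tau>. B (f \<tau>) \<tau>) has_integral (f s - f a)) {a..s})"

lemma integral_curve_iff_final:
  assumes "a \<le> b"
  shows "integral_curve B f a b \<longleftrightarrow>
    (\<forall>s\<in>{a..b}. ((\<lambda>\<tau>. B (f \<tau>) \<tau>) has_integral (f b - f s)) {s..b})"
    (is "_ \<longleftrightarrow> (\<forall>s\<in>_. (?F has_integral _) _)")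
proof -
  have split: "integral {a..s} ?F + integral {s..b} ?F = integral {a..b} ?F"
    and lower: "(?F has_integral integral {a..s} ?F) {a..s}"
    and upper: "(?F has_integral integral {s..b} ?F) {s..b}"
    if "?F integrable_on {a..b}" "s \<in> {a..b}" for s
    using that Henstock_Kurzweil_Integration.integral_combine[of a s b ?F]
      integrable_subinterval_real[of ?F a b] by auto
  show ?thesis
  proof
    assume "integral_curve B f a b"
    then have initial: "(?F has_integral (f s - f a)) {a..s}" if "s \<in> {a..b}" for s
      using that unfolding integral_curve_def by blast
    show "\<forall>s\<in>{a..b}. (?F has_integral (f b - f s)) {s..b}"
    proof
      fix s assume s: "s \<in> {a..b}"
      have ab: "(?F has_integral (f b - f a)) {a..b}" using initial[of b] assms by auto
      then have "integral {s..b} ?F = f b - f s"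
        using split[OF has_integral_integrable[OF ab] s] integral_unique[OF ab]
          integral_unique[OF initial[OF s]] by (simp add: algebra_simps)
      then show "(?F has_integral (f b - f s)) {s..b}"
        using upper[OF has_integral_integrable[OF ab] s] by simp
    qed
  next
    assume final: "\<forall>s\<in>{a..b}. (?F has_integral (f b - f s)) {s..b}"
    show "integral_curve B f a b"
      unfolding integral_curve_def
    proof
      fix s assume s: "s \<in> {a..b}"
      have ab: "(?F has_integral (f b - f a)) {a..b}" using final assms by auto
      then have "integral {a..s} ?F = f s - f a"
        using split[OF has_integral_integrable[OF ab] s] integral_unique[OF ab]
          integral_unique[OF final[rule_format, OF s]] by (simp add: algebra_simps)
      then show "(?F has_integral (f s - f a)) {a..s}"
        using lower[OF has_integral_integrable[OF ab] s] by simp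
    qed
  qed
qed

lemma integral_curve_continuous_on:
  assumes "integral_curve B f a b" "a \<le> b"
  shows "continuous_on {a..b} f"
proof (rule continuous_on_eq)
  have "(\<lambda>\<tau>. B (f \<tau>) \<tau>) integrable_on {a..b}"
    using assms unfolding integral_curve_def by auto
  then show "continuous_on {a..b} (\<lambda>s. f a + integral {a..s} (\<lambda>\<tau>. B (f \<tau>) \<tau>))"
    by (intro continuous_on_add continuous_on_const indefinite_integral_continuous_1)
  show "f a + integral {a..s} (\<lambda>\<tau>. B (f \<tau>) \<tau>) = f s" if "s \<in> {a..b}" for s
  proof -
    have "((\<lambda>\<tau>. B (f \<tau>) \<tau>) has_integral (f s - f a)) {a..s}"
      using assms(1) that unfolding integral_curve_def by blast
    then show ?thesis by (simp add: integral_unique)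
  qed
qed

lemma integral_curve_dist_le_exp:
  assumes f: "integral_curve B f a b" and g: "integral_curve B g a b"
    and lip: "\<And>s. s \<in> {a..b} \<Longrightarrow> L-lipschitz_on UNIV (\<lambda>x. B x s)"
    and s: "s \<in> {a..b}"
  shows "dist (f s) (g s) \<le> dist (f a) (g a) * exp (L * (s - a))"
proof -
  define F where "F \<tau> = B (f \<tau>) \<tau>" for \<tau>
  define G where "G \<tau> = B (g \<tau>) \<tau>" for \<tau>
  define u where "u \<tau> = dist (f \<tau>) (g \<tau>)" for \<tau>
  have ab: "a \<le> b" using s by auto
  have L: "0 \<le> L" using lipschitz_on_nonneg[OF lip[of a]] ab by simp
  have u_cont: "continuous_on {a..b} u"
    unfolding u_def using integral_curve_continuous_on[OF f ab] integral_curve_continuous_on[OF g ab]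
    by (intro continuous_intros)
  have "u x \<le> u a + L * integral {a..x} u" if x: "x \<in> {a..b}" for x
  proof -
    have F: "(F has_integral (f x - f a)) {a..x}" and G: "(G has_integral (g x - g a)) {a..x}"
      using f g x unfolding integral_curve_def F_def G_def by auto
    have "f x - g x = (f a - g a) + integral {a..x} (\<lambda>\<tau>. F \<tau> - G \<tau>)"
      using integral_diff[OF has_integral_integrable[OF F] has_integral_integrable[OF G]]
        integral_unique[OF F] integral_unique[OF G] by (simp add: algebra_simps)
    then have "u x \<le> u a + norm (integral {a..x} (\<lambda>\<tau>. F \<tau> - G \<tau>))"
      unfolding u_def dist_norm by (metis norm_triangle_ineq)
    also have "norm (integral {a..x} (\<lambda>\<tau>. F \<tau> - G \<tau>)) \<le> integral {a..x} (\<lambda>\<tau>. L * u \<tau>)"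
    proof (rule integral_norm_bound_integral)
      show "(\<lambda>\<tau>. F \<tau> - G \<tau>) integrable_on {a..x}"
        using F G by (intro integrable_diff has_integral_integrable)
      show "(\<lambda>\<tau>. L * u \<tau>) integrable_on {a..x}"
        using x by (intro integrable_continuous_real continuous_intros continuous_on_subset[OF u_cont]) auto
      show "norm (F \<tau> - G \<tau>) \<le> L * u \<tau>" if "\<tau> \<in> {a..x}" for \<tau>
        using lipschitz_on_normD[OF lip[of \<tau>]] that x unfolding F_def G_def u_def dist_norm by auto
    qed
    finally show ?thesis by simp
  qed
  from gronwall_integral_inequality[OF u_cont L this s] show ?thesis
    by (simp add: u_def)
qed

lemma integral_curve_reflect:
  assumes "integral_curve B f a b" "a \<le> b"
  shows "integral_curve (\<lambda>x \<sigma>. - B x (- \<sigma>)) (\<lambda>\<sigma>. f (- \<sigma>)) (- b) (- a)"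
  unfolding integral_curve_def
proof
  fix \<sigma> assume \<sigma>: "\<sigma> \<in> {- b..- a}"
  have "((\<lambda>\<tau>. B (f \<tau>) \<tau>) has_integral (f b - f (- \<sigma>))) {- \<sigma>..b}"
    using assms \<sigma> by (simp add: integral_curve_iff_final)
  from has_integral_neg[OF this]
  have "((\<lambda>\<tau>. - B (f \<tau>) \<tau>) has_integral (f (- \<sigma>) - f b)) {- \<sigma>..b}"
    by simp
  then show "((\<lambda>\<tau>. - B (f (- \<tau>)) (- \<tau>)) has_integral (f (- \<sigma>) - f (- (- b)))) {- b..\<sigma>}"
    using has_integral_reflect_real[where f = "\<lambda>\<tau>. - B (f \<tau>) \<tau>" and a = "- \<sigma>" and b = b] by simp
qed

lemma integral_curve_dist_le_exp_reverse:
  assumes f: "integral_curve B f a b" and g: "integral_curve B g a b"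
    and lip: "\<And>s. s \<in> {a..b} \<Longrightarrow> L-lipschitz_on UNIV (\<lambda>x. B x s)"
    and s: "s \<in> {a..b}"
  shows "dist (f s) (g s) \<le> dist (f b) (g b) * exp (L * (b - s))"
proof -
  have ab: "a \<le> b" using s by simp
  have "(\<lambda>x. - B x (- \<sigma>)) = (\<lambda>x. - (\<lambda>x. B x (- \<sigma>)) x)" for \<sigma> by simp
  then have "L-lipschitz_on UNIV (\<lambda>x. - B x (- \<sigma>))" if "\<sigma> \<in> {- b..- a}" for \<sigma>
    using lip[of "- \<sigma>"] that by auto
  from integral_curve_dist_le_exp[OF integral_curve_reflect[OF f ab] integral_curve_reflect[OF g ab]
      this, of "- s"] s
  show ?thesis by simp
qed

lemma flow_integral_curve_forward:
  assumes "is_flow T B \<Phi>" "0 \<le> t" "t \<le> t0" "t0 \<le> T"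
  shows "integral_curve B (\<lambda>s. \<Phi> s t x) t t0"
  using assms unfolding is_flow_def integral_curve_def by auto

lemma flow_integral_curve_backward:
  assumes "is_flow T B \<Phi>" "0 \<le> t" "t \<le> t0" "t0 \<le> T"
  shows "integral_curve B (\<lambda>s. \<Phi> s t0 x) t t0"
  using assms unfolding is_flow_def by (auto simp: integral_curve_iff_final)

lemma flow_inverse:
  assumes flow: "is_flow T B \<Phi>" and lip: "\<And>s. s \<in> {0..T} \<Longrightarrow> L-lipschitz_on UNIV (\<lambda>x. B x s)"
    and t: "0 \<le> t" "t \<le> t0" "t0 \<le> T"
  shows "\<Phi> t t0 (\<Phi> t0 t y) = y"
proof -
  let ?z = "\<Phi> t0 t y"
  have "dist (\<Phi> t t y) (\<Phi> t t0 ?z) \<le> dist (\<Phi> t0 t y) (\<Phi> t0 t0 ?z) * exp (L * (t0 - t))"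
    using integral_curve_dist_le_exp_reverse[OF flow_integral_curve_forward[OF flow t]
        flow_integral_curve_backward[OF flow t]] lip t by auto
  moreover have "\<Phi> t t y = y" "\<Phi> t0 t0 ?z = ?z"
    using flow t unfolding is_flow_def by auto
  ultimately show ?thesis by simp
qed

lemma flow_dist_le_exp:
  assumes flow: "is_flow T B \<Phi>" and lip: "\<And>s. s \<in> {0..T} \<Longrightarrow> L-lipschitz_on UNIV (\<lambda>x. B x s)"
    and t: "0 \<le> t" "t \<le> t0" "t0 \<le> T"
  shows "dist (\<Phi> t0 t y) x \<le> dist y (\<Phi> t t0 x) * exp (L * (t0 - t))"
proof -
  have "dist (\<Phi> t0 t y) (\<Phi> t0 t0 x) \<le> dist (\<Phi> t t y) (\<Phi> t t0 x) * exp (L * (t0 - t))"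
    using integral_curve_dist_le_exp[OF flow_integral_curve_forward[OF flow t]
        flow_integral_curve_backward[OF flow t]] lip t by auto
  moreover have "\<Phi> t t y = y" "\<Phi> t0 t0 x = x"
    using flow t unfolding is_flow_def by auto
  ultimately show ?thesis by simp
qed

lemma flow_displacement_le:
  assumes flow: "is_flow T B \<Phi>" and bound: "\<And>x s. s \<in> {0..T} \<Longrightarrow> norm (B x s) \<le> M"
    and t: "0 \<le> t" "t \<le> t0" "t0 \<le> T"
  shows "dist (\<Phi> t t0 x) x \<le> M * (t0 - t)"
proof -
  have "((\<lambda>s. B (\<Phi> s t0 x) s) has_integral (x - \<Phi> t t0 x)) {t..t0}"
    using flow t unfolding is_flow_def by auto
  moreover have "0 \<le> M"
    using bound[of t0] t by (meson atLeastAtMost_iff norm_ge_zero order_trans)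
  ultimately have "norm (x - \<Phi> t t0 x) \<le> M * Henstock_Kurzweil_Integration.content {t..t0}"
    using bound t by (intro has_integral_bound_real[where S = "{}"]) auto
  then show ?thesis
    using t by (simp add: dist_norm norm_minus_commute)
qed

lemma flow_cball_margin:
  assumes flow: "is_flow T B \<Phi>" and lip: "\<And>s. s \<in> {0..T} \<Longrightarrow> L-lipschitz_on UNIV (\<lambda>x. B x s)"
    and t: "0 \<le> t" "t \<le> t0" "t0 \<le> T"
    and into: "\<forall>x\<in>cball x0 r. \<Phi> t t0 x \<in> U" and x: "x \<in> cball x0 (r / 2)"
  shows "cball (\<Phi> t t0 x) (r / (2 * exp (L * T))) \<subseteq> U"
proof
  fix y assume y: "y \<in> cball (\<Phi> t t0 x) (r / (2 * exp (L * T)))"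
  have "0 \<le> L" using lipschitz_on_nonneg[OF lip[of 0]] t by simp
  have "0 \<le> r / (2 * exp (L * T))" using y by (meson mem_cball order_trans zero_le_dist)
  have "dist (\<Phi> t0 t y) x \<le> dist y (\<Phi> t t0 x) * exp (L * (t0 - t))"
    by (rule flow_dist_le_exp[OF flow lip t])
  also have "\<dots> \<le> r / (2 * exp (L * T)) * exp (L * T)"
    using y t \<open>0 \<le> L\<close> \<open>0 \<le> r / (2 * exp (L * T))\<close>
    by (intro mult_mono) (auto simp: dist_commute mult_left_mono)
  also have "\<dots> = r / 2" by simp
  finally have "\<Phi> t0 t y \<in> cball x0 r"
    using x dist_triangle[of x0 "\<Phi> t0 t y" x] by (simp add: dist_commute)
  then have "\<Phi> t t0 (\<Phi> t0 t y) \<in> U" using into by blast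
  then show "y \<in> U" using flow_inverse[OF flow lip t] by simp
qed

lemma bounded_UN_ball:
  fixes S :: "'a::real_normed_vector set"
  assumes "bounded S"
  shows "bounded (\<Union>y\<in>S. ball y e)"
proof -
  obtain R where R: "\<And>y. y \<in> S \<Longrightarrow> norm y \<le> R" using assms unfolding bounded_iff by blast
  have "norm z \<le> R + e" if "y \<in> S" "z \<in> ball y e" for y z
    using R[OF that(1)] that(2) norm_triangle_sub[of z y] by (simp add: dist_norm norm_minus_commute)
  then have "(\<Union>y\<in>S. ball y e) \<subseteq> cball 0 (R + e)" by auto
  then show ?thesis using bounded_cball bounded_subset by blast
qed

lemma closure_UN_ball_subset:
  fixes S U :: "'a::metric_space set"
  assumes "0 < e" and "\<And>y. y \<in> S \<Longrightarrow> cball y (2 * e) \<subseteq> U"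
  shows "closure (\<Union>y\<in>S. ball y e) \<subseteq> U"
proof
  fix w assume "w \<in> closure (\<Union>y\<in>S. ball y e)"
  then obtain w' where w': "w' \<in> (\<Union>y\<in>S. ball y e)" "dist w' w < e"
    using \<open>0 < e\<close> unfolding closure_approachable by blast
  then obtain y where "y \<in> S" "dist y w' < e" by auto
  then have "w \<in> cball y (2 * e)"
    using w'(2) dist_triangle[of y w w'] by simp
  then show "w \<in> U" using assms \<open>y \<in> S\<close> by blast
qed

lemma flushing_mono:
  assumes "flushing T T0 r \<Phi> \<Omega> U" "U \<subseteq> V"
  shows "flushing T T0 r \<Phi> \<Omega> V"
  using assms unfolding flushing_def by (meson subsetD)

lemma flushing_half_radius_margin:
  assumes flow: "is_flow T B \<Phi>" and lip: "\<And>s. s \<in> {0..T} \<Longrightarrow> L-lipschitz_on UNIV (\<lambda>x. B x s)"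
    and bound: "\<And>x s. s \<in> {0..T} \<Longrightarrow> norm (B x s) \<le> M"
    and R: "\<And>x. x \<in> closure \<Omega> \<Longrightarrow> norm x \<le> R"
    and flushing: "flushing T T0 r \<Phi> \<Omega> U"
  shows "flushing T T0 (r / 2) \<Phi> \<Omega>
    {p. norm p \<le> R + r / 2 + M * T \<and> cball p (r / (2 * exp (L * T))) \<subseteq> U}"
  unfolding flushing_def
proof (intro ballI)
  fix x0 t0 assume x0: "x0 \<in> closure \<Omega>" and t0: "t0 \<in> {T0..T}"
  then obtain t where t: "t \<in> {t0 - T0<..<t0}" and into: "\<forall>x\<in>cball x0 r. \<Phi> t t0 x \<in> U"
    using flushing unfolding flushing_def by blast
  have t_range: "0 \<le> t" "t \<le> t0" "t0 \<le> T" using t t0 by auto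
  have "0 \<le> M" using bound[of t0 x0] t_range by (smt (verit) atLeastAtMost_iff norm_ge_zero)
  have "norm (\<Phi> t t0 x) \<le> R + r / 2 + M * T" if x: "x \<in> cball x0 (r / 2)" for x
  proof -
    have "norm (\<Phi> t t0 x) \<le> norm x0 + dist x0 x + dist (\<Phi> t t0 x) x"
      using norm_triangle_sub[of "\<Phi> t t0 x" x] norm_triangle_sub[of x x0]
      by (simp add: dist_norm norm_minus_commute)
    also have "\<dots> \<le> R + r / 2 + M * T"
      using R[OF x0] x flow_displacement_le[OF flow bound t_range, of x] \<open>0 \<le> M\<close> t_range
        mult_left_mono[of "t0 - t" T M] by simp
    finally show ?thesis .
  qed
  then show "\<exists>t\<in>{t0 - T0<..<t0}. \<forall>x\<in>cball x0 (r / 2).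
      \<Phi> t t0 x \<in> {p. norm p \<le> R + r / 2 + M * T \<and> cball p (r / (2 * exp (L * T))) \<subseteq> U}"
    using t flow_cball_margin[OF flow lip t_range into] by blast
qed

theorem proposition2p2:
  fixes \<Omega> U :: "'a::euclidean_space set"
    and B :: "'a \<Rightarrow> real \<Rightarrow> 'a"
    and \<Phi> :: "real \<Rightarrow> real \<Rightarrow> 'a \<Rightarrow> 'a"
    and T T0 r0 :: real
  assumes "open \<Omega>" "bounded \<Omega>"
    and "T > 0" "0 < T0" "T0 < T" "r0 > 0"
    and "Linf_W1inf T B"
    and "is_flow T B \<Phi>"
    and "open U" "U \<noteq> {}" "bounded (frontier U)"
    and "flushing T T0 r0 \<Phi> \<Omega> U"
  shows "\<exists>O0. open O0 \<and> compact (closure O0) \<and> closure O0 \<subseteq> U \<and>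
               flushing T T0 (r0/2) \<Phi> \<Omega> O0"
proof -
  obtain M where M: "\<And>x s. s \<in> {0..T} \<Longrightarrow> norm (B x s) \<le> M"
    using \<open>Linf_W1inf T B\<close> unfolding Linf_W1inf_def by blast
  obtain L where L: "\<And>s. s \<in> {0..T} \<Longrightarrow> L-lipschitz_on UNIV (\<lambda>x. B x s)"
    using \<open>Linf_W1inf T B\<close> unfolding Linf_W1inf_def by blast
  obtain R where R: "\<And>x. x \<in> closure \<Omega> \<Longrightarrow> norm x \<le> R"
    using bounded_closure[OF \<open>bounded \<Omega>\<close>] unfolding bounded_iff by blast
  define e where "e = r0 / (4 * exp (L * T))"
  define S where "S = {p. norm p \<le> R + r0 / 2 + M * T \<and> cball p (r0 / (2 * exp (L * T))) \<subseteq> U}"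
  define O0 where "O0 = (\<Union>y\<in>S. ball y e)"
  have "0 < e" using \<open>r0 > 0\<close> by (simp add: e_def)
  have "flushing T T0 (r0 / 2) \<Phi> \<Omega> O0"
  proof (rule flushing_mono)
    show "flushing T T0 (r0 / 2) \<Phi> \<Omega> S"
      unfolding S_def
      using flushing_half_radius_margin[OF \<open>is_flow T B \<Phi>\<close> L M R \<open>flushing T T0 r0 \<Phi> \<Omega> U\<close>] .
    show "S \<subseteq> O0" unfolding O0_def using \<open>0 < e\<close> by auto
  qed
  moreover have "bounded S" unfolding S_def bounded_iff by blast
  then have "compact (closure O0)" unfolding O0_def by (simp add: bounded_UN_ball)
  moreover have "closure O0 \<subseteq> U"
    unfolding O0_def by (rule closure_UN_ball_subset[OF \<open>0 < e\<close>]) (simp add: S_def e_def)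
  moreover have "open O0" unfolding O0_def by blast
  ultimately show ?thesis by blast
qed

end
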